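(* Let $f(x)=\frac1n\sum_{i=1}^nf_i(x)$ on $\mathbb{R}^d$, where each $f_i$ is convex, $L_i$-smooth and non-negative, and let $x^*$ be a minimizer of $f$. Consider SGD with the SPS$^\ell_{\max}$ stepsize (defined in the context) using $\ell^*_{\mathcal S}=0$ for all $\mathcal S\subseteq[n]$, and let $\alpha:=\min\{\frac1{2cL_{\max}},\gamma_b\}$ with $L_{\max}=\max_iL_i$. (i) If $c=1$, then for every $K\ge1$, $\mathbb{E}[f(\bar x^K)-f(x^* )]\le\frac{\|x^0-x^*\|^2}{\alpha K}+\frac{2\gamma_bf(x^* )}{\alpha}$, where $\bar x^K=\frac1K\sum_{k=0}^{K-1}x^k$. (ii) If in addition $f$ is $\mu$-strongly convex and $c\ge1/2$, then for every $k\ge0$, $\mathbb{E}\|x^k-x^*\|^2\le(1-\mu\alpha)^k\|x^0-x^*\|^2+\frac{2\gamma_bf(x^* )}{\mu\alpha}$.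
   Context: Minibatches: fix a batch size $B$; at each iteration a subset $\mathcal S_k\subseteq[n]$, $|\mathcal S_k|=B$, is sampled uniformly at random, independently across iterations. For $\mathcal S\subseteq[n]$, $f_{\mathcal S}:=\frac1{|\mathcal S|}\sum_{i\in\mathcal S}f_i$. SGD: $x^{k+1}=x^k-\gamma_k\nabla f_{\mathcal S_k}(x^k)$ from given $x^0$. SPS$^\ell_{\max}$ stepsize with $\ell^*=0$: $\gamma_k=\min\left\{\frac{f_{\mathcal S_k}(x^k)}{c\|\nabla f_{\mathcal S_k}(x^k)\|^2},\ \gamma_b\right\}$ with constants $c,\gamma_b>0$; if $\nabla f_{\mathcal S_k}(x^k)=0$ the iterate is not updated. *)

theory Defs
  imports "HOL-Analysis.Analysis"
begin

definition L_smooth :: "real \<Rightarrow> ('a::euclidean_space \<Rightarrow> real) \<Rightarrow> ('a \<Rightarrow> 'a) \<Rightarrow> bool" where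
  "L_smooth L f g \<longleftrightarrow>
     (\<forall>x. (f has_derivative (\<lambda>h. g x \<bullet> h)) (at x)) \<and>
     (\<forall>x y. norm (g x - g y) \<le> L * norm (x - y))"

definition strongly_convex :: "real \<Rightarrow> ('a::real_normed_vector \<Rightarrow> real) \<Rightarrow> bool" where
  "strongly_convex \<mu> f \<longleftrightarrow>
     (\<forall>x y. \<forall>t\<in>{0..1}. f ((1 - t) *\<^sub>R x + t *\<^sub>R y)
        \<le> (1 - t) * f x + t * f y - \<mu> / 2 * t * (1 - t) * (norm (x - y))\<^sup>2)"

definition favg :: "nat \<Rightarrow> (nat \<Rightarrow> 'a \<Rightarrow> real) \<Rightarrow> 'a \<Rightarrow> real" where
  "favg n fs x = (\<Sum>i<n. fs i x) / real n"

definition fS :: "(nat \<Rightarrow> 'a \<Rightarrow> real) \<Rightarrow> nat set \<Rightarrow> 'a \<Rightarrow> real" where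
  "fS fs S x = (\<Sum>i\<in>S. fs i x) / real (card S)"

definition gS :: "(nat \<Rightarrow> 'a \<Rightarrow> 'a::real_vector) \<Rightarrow> nat set \<Rightarrow> 'a \<Rightarrow> 'a" where
  "gS gs S x = (1 / real (card S)) *\<^sub>R (\<Sum>i\<in>S. gs i x)"

text \<open>The set of admissible minibatches: subsets of [n] = {0..<n} of size B.\<close>
definition batches :: "nat \<Rightarrow> nat \<Rightarrow> nat set set" where
  "batches n B = {S. S \<subseteq> {..<n} \<and> card S = B}"

definition sps_step :: "(nat \<Rightarrow> 'a \<Rightarrow> real) \<Rightarrow> (nat \<Rightarrow> 'a \<Rightarrow> 'a::real_inner)
    \<Rightarrow> real \<Rightarrow> real \<Rightarrow> 'a \<Rightarrow> nat set \<Rightarrow> 'a" where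
  "sps_step fs gs c \<gamma>b x S =
     (let g = gS gs S x in
      if g = 0 then x
      else x - min (fS fs S x / (c * (norm g)\<^sup>2)) \<gamma>b *\<^sub>R g)"

text \<open>The iterate x^k as a function of the sampled minibatches [S_0,...,S_{k-1}].\<close>
definition sps_iter :: "(nat \<Rightarrow> 'a \<Rightarrow> real) \<Rightarrow> (nat \<Rightarrow> 'a \<Rightarrow> 'a::real_inner)
    \<Rightarrow> real \<Rightarrow> real \<Rightarrow> 'a \<Rightarrow> nat set list \<Rightarrow> 'a" where
  "sps_iter fs gs c \<gamma>b x0 Ss = foldl (sps_step fs gs c \<gamma>b) x0 Ss"

text \<open>Sample space for k i.i.d. uniform minibatch draws, and the expectation
  of a function of the draws (uniform distribution on this finite set).\<close>
definition samples :: "nat \<Rightarrow> nat \<Rightarrow> nat \<Rightarrow> nat set list set" where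
  "samples n B k = {Ss. length Ss = k \<and> set Ss \<subseteq> batches n B}"

definition Exp :: "nat \<Rightarrow> nat \<Rightarrow> nat \<Rightarrow> (nat set list \<Rightarrow> real) \<Rightarrow> real" where
  "Exp n B k X = (\<Sum>Ss\<in>samples n B k. X Ss) / real (card (samples n B k))"

end

theory Submission
  imports Defs
begin

text \<open>
  Nonnegativity and L-smoothness of a minibatch loss f_S give the gradient bound
  |grad f_S|^2 <= 2 L f_S, so every SPS stepsize gamma lies in [alpha, gamma_b] and
  satisfies gamma |grad f_S|^2 <= f_S / c.  Expanding |x - gamma grad f_S - z|^2 and using
  convexity of f_S then bounds the new squared distance to an arbitrary point z by the
  old one, minus 2 alpha times the Bregman divergence of f_S between z and x, minus a
  multiple of f_S(x), plus 2 gamma_b f_S(z).  Averaging over the uniformly drawn batch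
  replaces f_S by f.  For c = 1, telescoping this bound and Jensen's inequality for the
  averaged iterate give (i); under mu-strong convexity the Bregman term dominates
  mu/2 |x - z|^2, so the expected squared distance contracts by 1 - mu alpha up to the
  additive term 2 gamma_b f(z), which gives (ii).
\<close>

section \<open>First-order inequalities for convex and smooth functions\<close>

lemma gradient_inner_le_of_chord_bound:
  fixes f :: "'a::real_inner \<Rightarrow> real"
  assumes deriv: "(f has_derivative (\<lambda>h. G \<bullet> h)) (at x)"
    and chord: "\<And>t. 0 < t \<Longrightarrow> t < 1 \<Longrightarrow>
      f (x + t *\<^sub>R (y - x)) \<le> (1 - t) * f x + t * f y - t * (1 - t) * m"
  shows "G \<bullet> (y - x) \<le> f y - f x - m"
proof -
  define \<phi> where "\<phi> t = f (x + t *\<^sub>R (y - x))" for t :: real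
  have line: "((\<lambda>t::real. x + t *\<^sub>R (y - x)) has_derivative (\<lambda>t. t *\<^sub>R (y - x))) (at 0)"
    by (auto intro!: derivative_eq_intros)
  have "(f has_derivative (\<lambda>h. G \<bullet> h)) (at (x + 0 *\<^sub>R (y - x)))"
    using deriv by simp
  from has_derivative_compose[OF line this]
  have "(\<phi> has_field_derivative (G \<bullet> (y - x))) (at 0)"
    unfolding \<phi>_def by (rule has_derivative_imp_has_field_derivative) simp
  hence "(\<phi> has_field_derivative (G \<bullet> (y - x))) (at 0 within {0<..})"
    by (rule has_field_derivative_at_within)
  hence quotient: "((\<lambda>t. (\<phi> t - \<phi> 0) / (t - 0)) \<longlongrightarrow> G \<bullet> (y - x)) (at_right 0)"
    by (simp add: has_field_derivative_iff)
  have bound: "((\<lambda>t::real. f y - f x - (1 - t) * m) \<longlongrightarrow> f y - f x - (1 - 0) * m) (at_right 0)"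
    by (intro tendsto_intros)
  have "eventually (\<lambda>t::real. t < 1) (at_right 0)"
    by (rule eventually_at_rightI[of 0 1]) auto
  with eventually_at_right_less[of 0]
  have "eventually (\<lambda>t. (\<phi> t - \<phi> 0) / (t - 0) \<le> f y - f x - (1 - t) * m) (at_right 0)"
  proof eventually_elim
    case (elim t)
    then have "\<phi> t - \<phi> 0 \<le> t * (f y - f x - (1 - t) * m)"
      using chord[of t] by (simp add: \<phi>_def algebra_simps)
    with elim show ?case by (simp add: divide_simps mult.commute)
  qed
  from tendsto_le[OF _ bound quotient this] show ?thesis by simp
qed

definition bregman :: "('a::real_inner \<Rightarrow> real) \<Rightarrow> ('a \<Rightarrow> 'a) \<Rightarrow> 'a \<Rightarrow> 'a \<Rightarrow> real" where
  "bregman f g y x = f y - f x - g x \<bullet> (y - x)"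

lemma convex_on_bregman_nonneg:
  fixes f :: "'a::real_inner \<Rightarrow> real"
  assumes "convex_on UNIV f" "(f has_derivative (\<lambda>h. g x \<bullet> h)) (at x)"
  shows "0 \<le> bregman f g y x"
proof -
  have "g x \<bullet> (y - x) \<le> f y - f x - 0"
  proof (rule gradient_inner_le_of_chord_bound[OF assms(2)])
    fix t :: real assume "0 < t" "t < 1"
    with assms(1) have "f ((1 - t) *\<^sub>R x + t *\<^sub>R y) \<le> (1 - t) * f x + t * f y"
      unfolding convex_on_def by auto
    then show "f (x + t *\<^sub>R (y - x)) \<le> (1 - t) * f x + t * f y - t * (1 - t) * 0"
      by (simp add: algebra_simps)
  qed
  then show ?thesis by (simp add: bregman_def)
qed

lemma strongly_convex_bregman_ge:
  fixes f :: "'a::real_inner \<Rightarrow> real"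
  assumes "strongly_convex \<mu> f" "(f has_derivative (\<lambda>h. g x \<bullet> h)) (at x)"
  shows "\<mu> / 2 * (norm (y - x))\<^sup>2 \<le> bregman f g y x"
proof -
  have "g x \<bullet> (y - x) \<le> f y - f x - \<mu> / 2 * (norm (x - y))\<^sup>2"
  proof (rule gradient_inner_le_of_chord_bound[OF assms(2)])
    fix t :: real assume "0 < t" "t < 1"
    with assms(1) have "f ((1 - t) *\<^sub>R x + t *\<^sub>R y)
        \<le> (1 - t) * f x + t * f y - \<mu> / 2 * t * (1 - t) * (norm (x - y))\<^sup>2"
      unfolding strongly_convex_def by auto
    then show "f (x + t *\<^sub>R (y - x))
        \<le> (1 - t) * f x + t * f y - t * (1 - t) * (\<mu> / 2 * (norm (x - y))\<^sup>2)"
      by (simp add: algebra_simps)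
  qed
  then show ?thesis by (simp add: bregman_def norm_minus_commute)
qed

lemma L_smooth_bregman_le:
  fixes f :: "'a::euclidean_space \<Rightarrow> real"
  assumes "L_smooth L f g"
  shows "bregman f g y x \<le> L / 2 * (norm (y - x))\<^sup>2"
proof -
  define v where "v = y - x"
  have deriv: "\<And>z. (f has_derivative (\<lambda>h. g z \<bullet> h)) (at z)"
    and lipschitz: "\<And>a b. norm (g a - g b) \<le> L * norm (a - b)"
    using assms unfolding L_smooth_def by auto
  define \<psi> where "\<psi> t = f (x + t *\<^sub>R v) - t * (g x \<bullet> v) - L / 2 * t\<^sup>2 * (norm v)\<^sup>2" for t :: real
  have \<psi>_deriv: "(\<psi> has_real_derivative g (x + t *\<^sub>R v) \<bullet> v - g x \<bullet> v - L * t * (norm v)\<^sup>2) (at t)"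
    for t
  proof -
    have "((\<lambda>t::real. x + t *\<^sub>R v) has_derivative (\<lambda>t. t *\<^sub>R v)) (at t)"
      by (auto intro!: derivative_eq_intros)
    from has_derivative_compose[OF this deriv]
    have "((\<lambda>t. f (x + t *\<^sub>R v)) has_real_derivative g (x + t *\<^sub>R v) \<bullet> v) (at t)"
      by (rule has_derivative_imp_has_field_derivative) simp
    then show ?thesis
      unfolding \<psi>_def by (auto intro!: derivative_eq_intros)
  qed
  have "\<psi> 1 \<le> \<psi> 0"
  proof (rule DERIV_nonpos_imp_nonincreasing[of 0 1])
    fix t :: real assume t: "0 \<le> t" "t \<le> 1"
    have "(g (x + t *\<^sub>R v) - g x) \<bullet> v \<le> norm (g (x + t *\<^sub>R v) - g x) * norm v"
      by (rule norm_cauchy_schwarz)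
    also have "\<dots> \<le> L * norm (t *\<^sub>R v) * norm v"
      using lipschitz[of "x + t *\<^sub>R v" x] by (intro mult_right_mono) auto
    also have "\<dots> = L * t * (norm v)\<^sup>2"
      using t by (simp add: power2_eq_square)
    finally show "\<exists>d. (\<psi> has_real_derivative d) (at t) \<and> d \<le> 0"
      using \<psi>_deriv[of t]
      by (intro exI[of _ "g (x + t *\<^sub>R v) \<bullet> v - g x \<bullet> v - L * t * (norm v)\<^sup>2"]) (simp add: inner_diff_left)
  qed simp
  then show ?thesis by (simp add: \<psi>_def v_def bregman_def)
qed

lemma L_smooth_nonneg_gradient_bound:
  fixes f :: "'a::euclidean_space \<Rightarrow> real"
  assumes "L_smooth L f g" "L > 0" "\<And>y. f y \<ge> 0"
  shows "(norm (g x))\<^sup>2 \<le> 2 * L * f x"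
proof -
  \<comment> \<open>Evaluate the quadratic upper bound at the minimiser of its right-hand side.\<close>
  define y where "y = x - (1 / L) *\<^sub>R g x"
  have "0 \<le> f y" by (rule assms(3))
  also have "\<dots> \<le> f x + g x \<bullet> (y - x) + L / 2 * (norm (y - x))\<^sup>2"
    using L_smooth_bregman_le[OF assms(1), of y x] by (simp add: bregman_def)
  also have "\<dots> = f x - (norm (g x))\<^sup>2 / (2 * L)"
    using \<open>L > 0\<close>
    by (simp add: y_def power_mult_distrib power2_norm_eq_inner field_simps) (simp add: power2_eq_square)
  finally show ?thesis using \<open>L > 0\<close> by (simp add: field_simps)
qed

lemma strongly_convex_le_L_smooth:
  fixes f :: "'a::euclidean_space \<Rightarrow> real"
  assumes "strongly_convex \<mu> f" "L_smooth L f g"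
  shows "\<mu> \<le> L"
proof -
  obtain b :: 'a where b: "b \<in> Basis" using nonempty_Basis by blast
  have "(f has_derivative (\<lambda>h. g 0 \<bullet> h)) (at 0)"
    using assms(2) by (simp add: L_smooth_def)
  from strongly_convex_bregman_ge[of \<mu> f g 0 b, OF assms(1) this] L_smooth_bregman_le[OF assms(2), of b 0]
  have "\<mu> / 2 * (norm b)\<^sup>2 \<le> L / 2 * (norm b)\<^sup>2" by simp
  with b show ?thesis by simp
qed

section \<open>Minibatch functions\<close>

lemma favg_eq_fS: "favg n fs = fS fs {..<n}"
  by (simp add: fun_eq_iff favg_def fS_def)

lemma bregman_fS: "bregman (fS fs S) (gS gs S) y x = fS (\<lambda>i. bregman (fs i) (gs i) y) S x"
  by (simp add: bregman_def fS_def gS_def inner_sum_left sum_subtractf diff_divide_distrib)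

lemma convex_on_fS:
  assumes "\<And>i. i \<in> S \<Longrightarrow> convex_on UNIV (fs i)"
  shows "convex_on UNIV (fS fs S)"
proof -
  have "convex_on UNIV (\<lambda>x. \<Sum>i\<in>S. fs i x)"
    using assms by (induction S rule: infinite_finite_induct) (auto simp: convex_on_const)
  then show ?thesis
    unfolding fS_def by (rule convex_on_cdiv[rotated]) simp
qed

lemma L_smooth_fS:
  assumes "finite S" "S \<noteq> {}"
    and smooth: "\<And>i. i \<in> S \<Longrightarrow> L_smooth (L i) (fs i) (gs i)"
    and bound: "\<And>i. i \<in> S \<Longrightarrow> L i \<le> M"
  shows "L_smooth M (fS fs S) (gS gs S)"
  unfolding L_smooth_def
proof safe
  fix x
  have "((\<lambda>x. (1 / real (card S)) * (\<Sum>i\<in>S. fs i x)) has_derivative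
      (\<lambda>h. (1 / real (card S)) * (\<Sum>i\<in>S. gs i x \<bullet> h))) (at x)"
    using smooth by (intro has_derivative_mult_right has_derivative_sum) (auto simp: L_smooth_def)
  then show "(fS fs S has_derivative (\<lambda>h. gS gs S x \<bullet> h)) (at x)"
    by (simp add: fS_def[abs_def] gS_def inner_sum_left)
next
  fix x y
  have "norm (\<Sum>i\<in>S. gs i x - gs i y) \<le> (\<Sum>i\<in>S. norm (gs i x - gs i y))"
    by (rule norm_sum)
  also have "\<dots> \<le> (\<Sum>i\<in>S. M * norm (x - y))"
  proof (rule sum_mono)
    fix i assume "i \<in> S"
    with smooth[of i] bound[of i]
    show "norm (gs i x - gs i y) \<le> M * norm (x - y)"
      unfolding L_smooth_def by (meson mult_right_mono norm_ge_zero order_trans)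
  qed
  finally show "norm (gS gs S x - gS gs S y) \<le> M * norm (x - y)"
    using assms(1,2) by (simp add: gS_def sum_subtractf flip: scaleR_diff_right)
      (simp add: pos_divide_le_eq card_gt_0_iff mult.commute mult.left_commute)
qed

section \<open>The SPS step\<close>

lemma sps_step_as_gradient_step:
  assumes smooth: "L_smooth L (fS fs S) (gS gs S)"
    and nonneg: "\<And>y. fS fs S y \<ge> 0"
    and pos: "L > 0" "c > 0" "\<gamma>b > 0"
  obtains \<gamma> where "min (1 / (2 * c * L)) \<gamma>b \<le> \<gamma>" "\<gamma> \<le> \<gamma>b"
    "\<gamma> * (norm (gS gs S x))\<^sup>2 \<le> fS fs S x / c"
    "sps_step fs gs c \<gamma>b x S = x - \<gamma> *\<^sub>R gS gs S x"
proof (cases "gS gs S x = 0")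
  case True
  \<comment> \<open>A vanishing gradient leaves x fixed, which is a gradient step of any length.\<close>
  then show ?thesis
    using that[of "min (1 / (2 * c * L)) \<gamma>b"] nonneg[of x] pos
    by (simp add: sps_step_def)
next
  case False
  define F where "F = fS fs S x"
  define g where "g = gS gs S x"
  define \<gamma> where "\<gamma> = min (F / (c * (norm g)\<^sup>2)) \<gamma>b"
  have g_pos: "(norm g)\<^sup>2 > 0" using False by (simp add: g_def)
  have "(norm g)\<^sup>2 \<le> 2 * L * F"
    unfolding g_def F_def by (rule L_smooth_nonneg_gradient_bound[OF smooth pos(1) nonneg])
  with g_pos pos have "1 / (2 * c * L) \<le> F / (c * (norm g)\<^sup>2)"
    by (simp add: divide_simps mult.commute mult.left_commute)
  then have "min (1 / (2 * c * L)) \<gamma>b \<le> \<gamma>"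
    by (simp add: \<gamma>_def min.coboundedI1)
  moreover have "\<gamma> * (norm g)\<^sup>2 \<le> F / (c * (norm g)\<^sup>2) * (norm g)\<^sup>2"
    using g_pos by (intro mult_right_mono) (auto simp: \<gamma>_def)
  moreover have "sps_step fs gs c \<gamma>b x S = x - \<gamma> *\<^sub>R g"
    using False by (simp add: sps_step_def Let_def \<gamma>_def F_def g_def)
  ultimately show ?thesis
    using that[of \<gamma>] g_pos by (simp add: \<gamma>_def F_def g_def)
qed

lemma gradient_step_dist_sq_le:
  fixes x z g :: "'a::real_inner"
  assumes "0 \<le> \<alpha>" "\<alpha> \<le> \<gamma>" "\<gamma> \<le> \<gamma>b" "\<gamma> * (norm g)\<^sup>2 \<le> Fx / c" "c \<ge> 1 / 2"
    and "Fx \<ge> 0" "Fz \<ge> 0" "D \<ge> 0" "D = Fz - Fx - g \<bullet> (z - x)"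
  shows "(norm (x - \<gamma> *\<^sub>R g - z))\<^sup>2
    \<le> (norm (x - z))\<^sup>2 - 2 * \<alpha> * D - \<alpha> * (2 - 1 / c) * Fx + 2 * \<gamma>b * Fz"
proof -
  have "(norm (x - \<gamma> *\<^sub>R g - z))\<^sup>2 = (norm (x - z))\<^sup>2 - 2 * \<gamma> * (g \<bullet> (x - z)) + \<gamma> * (\<gamma> * (norm g)\<^sup>2)"
    by (simp add: power2_norm_eq_inner inner_diff_left inner_diff_right inner_commute algebra_simps)
  also have "g \<bullet> (x - z) = D + Fx - Fz"
    using assms(9) by (simp add: inner_diff_right)
  finally have expand: "(norm (x - \<gamma> *\<^sub>R g - z))\<^sup>2
      = (norm (x - z))\<^sup>2 - 2 * \<gamma> * D - 2 * \<gamma> * Fx + 2 * \<gamma> * Fz + \<gamma> * (\<gamma> * (norm g)\<^sup>2)"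
    by (simp add: algebra_simps)
  have "\<gamma> * (\<gamma> * (norm g)\<^sup>2) \<le> \<gamma> * (Fx / c)"
    using assms(1,2,4) by (intro mult_left_mono) auto
  moreover have "0 \<le> 2 - 1 / c"
    using assms(5) by (simp add: field_simps)
  then have "\<alpha> * D \<le> \<gamma> * D" "\<alpha> * ((2 - 1 / c) * Fx) \<le> \<gamma> * ((2 - 1 / c) * Fx)" "\<gamma> * Fz \<le> \<gamma>b * Fz"
    using assms(2,3,6-8) by (auto intro!: mult_right_mono)
  ultimately show ?thesis
    unfolding expand by (simp add: algebra_simps)
qed

section \<open>Averages over minibatches and sample paths\<close>

definition batch_mean :: "nat \<Rightarrow> nat \<Rightarrow> (nat set \<Rightarrow> real) \<Rightarrow> real" where
  "batch_mean n B h = (\<Sum>S\<in>batches n B. h S) / real (card (batches n B))"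

lemma finite_batches: "finite (batches n B)"
  by (rule finite_subset[of _ "Pow {..<n}"]) (auto simp: batches_def)

lemma card_batches: "card (batches n B) = n choose B"
  using n_subsets[of "{..<n}" B] by (simp add: batches_def)

lemma card_batches_containing:
  assumes "i < n" "1 \<le> B"
  shows "card {S \<in> batches n B. i \<in> S} = (n - 1) choose (B - 1)"
proof -
  let ?T = "{T. T \<subseteq> {..<n} - {i} \<and> card T = B - 1}"
  have "{S \<in> batches n B. i \<in> S} = insert i ` ?T"
  proof (intro equalityI subsetI)
    fix S assume S: "S \<in> {S \<in> batches n B. i \<in> S}"
    hence "finite S" by (auto simp: batches_def intro: finite_subset)
    with S have "S - {i} \<in> ?T" "S = insert i (S - {i})" by (auto simp: batches_def)
    then show "S \<in> insert i ` ?T" by blast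
  next
    fix S assume "S \<in> insert i ` ?T"
    then obtain T where T: "T \<in> ?T" "S = insert i T" by blast
    then have "finite T" by (auto intro: finite_subset)
    with T assms show "S \<in> {S \<in> batches n B. i \<in> S}"
      by (auto simp: batches_def card_insert_if)
  qed
  moreover have "inj_on (insert i) ?T"
    by (rule inj_onI) (metis Diff_iff insert_absorb insert_ident mem_Collect_eq singletonI subset_iff)
  ultimately have "card {S \<in> batches n B. i \<in> S} = card ?T"
    by (simp add: card_image)
  also have "\<dots> = card ({..<n} - {i}) choose (B - 1)"
    by (rule n_subsets) simp
  finally show ?thesis using assms by simp
qed

lemma batch_mean_fS:
  assumes "1 \<le> B" "B \<le> n"
  shows "batch_mean n B (\<lambda>S. fS fs S x) = favg n fs x"
proof -
  \<comment> \<open>Double counting: each index lies in exactly (n-1 choose B-1) of the batches.\<close>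
  have "(\<Sum>i\<in>S. fs i x) = (\<Sum>i<n. if i \<in> S then fs i x else 0)" if "S \<in> batches n B" for S
  proof -
    from that have "{..<n} \<inter> S = S" by (auto simp: batches_def)
    then show ?thesis by (simp add: sum.inter_restrict[symmetric])
  qed
  then have "(\<Sum>S\<in>batches n B. \<Sum>i\<in>S. fs i x) = (\<Sum>S\<in>batches n B. \<Sum>i<n. if i \<in> S then fs i x else 0)"
    by (rule sum.cong[OF refl])
  also have "\<dots> = (\<Sum>i<n. \<Sum>S\<in>batches n B. if i \<in> S then fs i x else 0)"
    by (rule sum.swap)
  also have "\<dots> = (\<Sum>i<n. fs i x * real ((n - 1) choose (B - 1)))"
    using assms by (intro sum.cong refl)
      (simp add: sum.If_cases[OF finite_batches] Int_def card_batches_containing mult.commute)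
  finally have double_count:
    "(\<Sum>S\<in>batches n B. \<Sum>i\<in>S. fs i x) = (\<Sum>i<n. fs i x) * real ((n - 1) choose (B - 1))"
    by (simp add: sum_distrib_right)
  have absorption: "real B * real (n choose B) = real n * real ((n - 1) choose (B - 1))"
    using binomial_absorption[of "B - 1" n] assms by (simp flip: of_nat_mult)
  have pos: "real (n choose B) > 0" "real B > 0" "real n > 0" "real ((n - 1) choose (B - 1)) > 0"
    using assms by auto
  have "(\<Sum>S\<in>batches n B. fS fs S x) = (\<Sum>S\<in>batches n B. \<Sum>i\<in>S. fs i x) / real B"
    unfolding sum_divide_distrib by (intro sum.cong refl) (simp add: fS_def batches_def sum_divide_distrib)
  then have "batch_mean n B (\<lambda>S. fS fs S x)
      = (\<Sum>S\<in>batches n B. \<Sum>i\<in>S. fs i x) / (real B * real (n choose B))"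
    by (simp add: batch_mean_def card_batches)
  also have "\<dots> = (\<Sum>i<n. fs i x) / real n"
    unfolding double_count absorption using pos by simp
  finally show ?thesis
    by (simp add: favg_def)
qed

lemma batch_mean_mono:
  "(\<And>S. S \<in> batches n B \<Longrightarrow> X S \<le> Y S) \<Longrightarrow> batch_mean n B X \<le> batch_mean n B Y"
  unfolding batch_mean_def by (intro divide_right_mono sum_mono) auto

lemma batch_mean_add: "batch_mean n B (\<lambda>S. X S + Y S) = batch_mean n B X + batch_mean n B Y"
  unfolding batch_mean_def by (simp add: sum.distrib add_divide_distrib)

lemma batch_mean_diff: "batch_mean n B (\<lambda>S. X S - Y S) = batch_mean n B X - batch_mean n B Y"
  unfolding batch_mean_def by (simp add: sum_subtractf diff_divide_distrib)

lemma batch_mean_cmult: "batch_mean n B (\<lambda>S. a * X S) = a * batch_mean n B X"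
  unfolding batch_mean_def by (simp add: sum_distrib_left[symmetric])

lemma batch_mean_const: "B \<le> n \<Longrightarrow> batch_mean n B (\<lambda>_. a) = a"
  by (simp add: batch_mean_def card_batches)

lemma samples_Suc: "samples n B (Suc k) = (\<lambda>(Ss, S). Ss @ [S]) ` (samples n B k \<times> batches n B)"
proof (intro equalityI subsetI)
  fix xs assume xs: "xs \<in> samples n B (Suc k)"
  then have "xs \<noteq> []" by (auto simp: samples_def)
  then obtain ys y where "xs = ys @ [y]" by (metis rev_exhaust)
  with xs show "xs \<in> (\<lambda>(Ss, S). Ss @ [S]) ` (samples n B k \<times> batches n B)"
    by (auto simp: samples_def image_iff)
qed (auto simp: samples_def)

lemma card_samples: "card (samples n B k) = (n choose B) ^ k"
proof -
  have "samples n B k = {xs. set xs \<subseteq> batches n B \<and> length xs = k}"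
    by (auto simp: samples_def)
  then show ?thesis
    by (simp add: card_lists_length_eq[OF finite_batches] card_batches)
qed

lemma Exp_0: "Exp n B 0 X = X []"
proof -
  have "samples n B 0 = {[]}" by (auto simp: samples_def)
  then show ?thesis by (simp add: Exp_def)
qed

text \<open>The tower property: the last minibatch is independent of the earlier ones.\<close>

lemma Exp_Suc: "Exp n B (Suc k) X = Exp n B k (\<lambda>Ss. batch_mean n B (\<lambda>S. X (Ss @ [S])))"
proof -
  have "inj_on (\<lambda>(Ss, S). Ss @ [S]) (samples n B k \<times> batches n B)"
    by (rule inj_onI) auto
  then have "(\<Sum>Ss\<in>samples n B (Suc k). X Ss) = (\<Sum>Ss\<in>samples n B k. \<Sum>S\<in>batches n B. X (Ss @ [S]))"
    by (simp add: samples_Suc sum.reindex sum.cartesian_product split_def)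
  then show ?thesis
    by (simp add: Exp_def batch_mean_def card_samples card_batches
        sum_divide_distrib[symmetric] divide_divide_eq_left mult.commute)
qed

lemma Exp_mono: "(\<And>Ss. Ss \<in> samples n B k \<Longrightarrow> X Ss \<le> Y Ss) \<Longrightarrow> Exp n B k X \<le> Exp n B k Y"
  unfolding Exp_def by (intro divide_right_mono sum_mono) auto

lemma Exp_nonneg: "(\<And>Ss. X Ss \<ge> 0) \<Longrightarrow> Exp n B k X \<ge> 0"
  unfolding Exp_def by (intro divide_nonneg_nonneg sum_nonneg) auto

lemma Exp_add: "Exp n B k (\<lambda>Ss. X Ss + Y Ss) = Exp n B k X + Exp n B k Y"
  unfolding Exp_def by (simp add: sum.distrib add_divide_distrib)

lemma Exp_diff: "Exp n B k (\<lambda>Ss. X Ss - Y Ss) = Exp n B k X - Exp n B k Y"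
  unfolding Exp_def by (simp add: sum_subtractf diff_divide_distrib)

lemma Exp_cmult: "Exp n B k (\<lambda>Ss. a * X Ss) = a * Exp n B k X"
  unfolding Exp_def by (simp add: sum_distrib_left[symmetric])

lemma Exp_sum: "Exp n B k (\<lambda>Ss. \<Sum>j\<in>J. X j Ss) = (\<Sum>j\<in>J. Exp n B k (X j))"
  unfolding Exp_def by (simp add: sum.swap[of _ J] sum_divide_distrib)

lemma Exp_const: "B \<le> n \<Longrightarrow> Exp n B k (\<lambda>_. a) = a"
  by (simp add: Exp_def card_samples)

lemma Exp_take:
  assumes "k \<le> K" "B \<le> n"
  shows "Exp n B K (\<lambda>Ss. X (take k Ss)) = Exp n B k X"
  using assms(1)
proof (induction K)
  case 0
  then show ?case by (simp add: Exp_0)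
next
  case (Suc K)
  show ?case
  proof (cases "k = Suc K")
    case True
    then show ?thesis
      unfolding Exp_def by (intro arg_cong2[where f = "(/)"] sum.cong) (auto simp: samples_def)
  next
    case False
    with Suc.prems have "k \<le> K" by simp
    have "Exp n B (Suc K) (\<lambda>Ss. X (take k Ss))
        = Exp n B K (\<lambda>Ss. batch_mean n B (\<lambda>S. X (take k (Ss @ [S]))))"
      by (rule Exp_Suc)
    also have "\<dots> = Exp n B K (\<lambda>Ss. X (take k Ss))"
      unfolding Exp_def using \<open>k \<le> K\<close> batch_mean_const[OF assms(2)]
      by (intro arg_cong2[where f = "(/)"] sum.cong) (auto simp: samples_def)
    finally show ?thesis using Suc.IH[OF \<open>k \<le> K\<close>] by simp
  qed
qed

lemma batch_mean_bregman:
  assumes "1 \<le> B" "B \<le> n"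
  shows "batch_mean n B (\<lambda>S. bregman (fS fs S) (gS gs S) y x) = bregman (favg n fs) (gS gs {..<n}) y x"
  using batch_mean_fS[OF assms, of "\<lambda>i. bregman (fs i) (gs i) y"]
  by (simp add: bregman_fS favg_eq_fS)

lemma Exp_convex_average_le:
  assumes "convex_on UNIV \<phi>" "K \<ge> 1" "B \<le> n"
  shows "Exp n B K (\<lambda>Ss. \<phi> ((1 / real K) *\<^sub>R (\<Sum>k<K. X (take k Ss))))
    \<le> (\<Sum>k<K. Exp n B k (\<lambda>Ss. \<phi> (X Ss))) / real K"
proof -
  have "\<phi> (\<Sum>k<K. (1 / real K) *\<^sub>R X (take k Ss)) \<le> (\<Sum>k<K. (1 / real K) * \<phi> (X (take k Ss)))" for Ss
    using assms(1,2) by (intro convex_on_sum) (auto simp: lessThan_empty_iff)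
  then have "Exp n B K (\<lambda>Ss. \<phi> ((1 / real K) *\<^sub>R (\<Sum>k<K. X (take k Ss))))
      \<le> Exp n B K (\<lambda>Ss. \<Sum>k<K. (1 / real K) * \<phi> (X (take k Ss)))"
    by (intro Exp_mono) (simp add: scaleR_sum_right)
  also have "\<dots> = (\<Sum>k<K. (1 / real K) * Exp n B K (\<lambda>Ss. \<phi> (X (take k Ss))))"
    by (simp only: Exp_sum Exp_cmult)
  also have "\<dots> = (\<Sum>k<K. (1 / real K) * Exp n B k (\<lambda>Ss. \<phi> (X Ss)))"
    by (intro sum.cong refl) (simp add: Exp_take[OF _ assms(3), where X = "\<lambda>Ss. \<phi> (X Ss)"])
  finally show ?thesis
    by (simp add: sum_divide_distrib)
qed

lemma affine_recurrence_le:
  fixes e :: "nat \<Rightarrow> real"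
  assumes "\<And>k. e (Suc k) \<le> q * e k + b" "0 \<le> q" "q < 1" "0 \<le> b"
  shows "e k \<le> q ^ k * e 0 + b / (1 - q)"
proof (induction k)
  case 0
  then show ?case using assms(3,4) by simp
next
  case (Suc k)
  have "e (Suc k) \<le> q * (q ^ k * e 0 + b / (1 - q)) + b"
    using assms(1)[of k] mult_left_mono[OF Suc.IH assms(2)] by linarith
  also have "\<dots> = q ^ Suc k * e 0 + b / (1 - q)"
    using assms(3) by (simp add: field_simps)
  finally show ?case .
qed

section \<open>Convergence of SGD with the SPS stepsize\<close>

locale sps_minibatch =
  fixes fs :: "nat \<Rightarrow> 'a::euclidean_space \<Rightarrow> real" and gs :: "nat \<Rightarrow> 'a \<Rightarrow> 'a"
    and L :: "nat \<Rightarrow> real" and n B :: nat and c \<gamma>b :: real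
  assumes B_range: "1 \<le> B" "B \<le> n"
    and c_pos: "c > 0" and gb_pos: "\<gamma>b > 0"
    and L_pos: "\<And>i. i < n \<Longrightarrow> L i > 0"
    and convex: "\<And>i. i < n \<Longrightarrow> convex_on UNIV (fs i)"
    and smooth: "\<And>i. i < n \<Longrightarrow> L_smooth (L i) (fs i) (gs i)"
    and nonneg: "\<And>i x. i < n \<Longrightarrow> fs i x \<ge> 0"
begin

definition Lmax :: real where
  "Lmax = Max (L ` {..<n})"

definition min_stepsize :: real where
  "min_stepsize = min (1 / (2 * c * Lmax)) \<gamma>b"

abbreviation iterate :: "'a \<Rightarrow> nat set list \<Rightarrow> 'a" where
  "iterate x0 \<equiv> sps_iter fs gs c \<gamma>b x0"

abbreviation grad :: "'a \<Rightarrow> 'a" where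
  "grad \<equiv> gS gs {..<n}"

lemma L_le_Lmax: "i < n \<Longrightarrow> L i \<le> Lmax"
  unfolding Lmax_def by (intro Max_ge) auto

lemma Lmax_pos: "Lmax > 0"
  using L_le_Lmax[of 0] L_pos[of 0] B_range by simp

lemma min_stepsize_pos: "min_stepsize > 0"
  using Lmax_pos c_pos gb_pos by (simp add: min_stepsize_def)

lemma fS_L_smooth: "S \<subseteq> {..<n} \<Longrightarrow> S \<noteq> {} \<Longrightarrow> L_smooth Lmax (fS fs S) (gS gs S)"
  by (rule L_smooth_fS) (auto intro: finite_subset smooth L_le_Lmax)

lemma fS_convex: "S \<subseteq> {..<n} \<Longrightarrow> convex_on UNIV (fS fs S)"
  by (rule convex_on_fS) (auto intro: convex)

lemma fS_nonneg: "S \<subseteq> {..<n} \<Longrightarrow> fS fs S x \<ge> 0"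
  unfolding fS_def by (auto intro!: divide_nonneg_nonneg sum_nonneg nonneg)

lemma fS_has_derivative:
  "S \<subseteq> {..<n} \<Longrightarrow> S \<noteq> {} \<Longrightarrow> (fS fs S has_derivative (\<lambda>h. gS gs S x \<bullet> h)) (at x)"
  using fS_L_smooth by (simp add: L_smooth_def)

lemma batch_subset: "S \<in> batches n B \<Longrightarrow> S \<subseteq> {..<n}"
  by (simp add: batches_def)

lemma batch_nonempty: "S \<in> batches n B \<Longrightarrow> S \<noteq> {}"
  using B_range by (auto simp: batches_def)

lemma favg_L_smooth: "L_smooth Lmax (favg n fs) grad"
  using fS_L_smooth[of "{..<n}"] B_range by (simp add: favg_eq_fS lessThan_empty_iff)

lemma favg_convex: "convex_on UNIV (favg n fs)"
  using fS_convex[of "{..<n}"] by (simp add: favg_eq_fS)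

lemma favg_has_derivative: "(favg n fs has_derivative (\<lambda>h. grad x \<bullet> h)) (at x)"
  using favg_L_smooth by (simp add: L_smooth_def)

lemma sps_step_dist_sq_le:
  assumes "c \<ge> 1 / 2" "S \<in> batches n B"
  shows "(norm (sps_step fs gs c \<gamma>b x S - z))\<^sup>2
    \<le> (norm (x - z))\<^sup>2 - 2 * min_stepsize * bregman (fS fs S) (gS gs S) z x
      - min_stepsize * (2 - 1 / c) * fS fs S x + 2 * \<gamma>b * fS fs S z"
proof -
  note S = batch_subset[OF assms(2)] batch_nonempty[OF assms(2)]
  obtain \<gamma> where \<gamma>: "min_stepsize \<le> \<gamma>" "\<gamma> \<le> \<gamma>b" "\<gamma> * (norm (gS gs S x))\<^sup>2 \<le> fS fs S x / c"
    and step: "sps_step fs gs c \<gamma>b x S = x - \<gamma> *\<^sub>R gS gs S x"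
    using sps_step_as_gradient_step[OF fS_L_smooth[OF S] fS_nonneg[OF S(1)] Lmax_pos c_pos gb_pos]
    unfolding min_stepsize_def by blast
  have "0 \<le> bregman (fS fs S) (gS gs S) z x"
    by (rule convex_on_bregman_nonneg[OF fS_convex[OF S(1)] fS_has_derivative[OF S]])
  from gradient_step_dist_sq_le[OF less_imp_le[OF min_stepsize_pos] \<gamma> assms(1)
      fS_nonneg[OF S(1)] fS_nonneg[OF S(1)] this]
  show ?thesis unfolding step by (simp add: bregman_def)
qed

lemma expected_dist_sq_Suc_le:
  assumes "c \<ge> 1 / 2"
  shows "Exp n B (Suc k) (\<lambda>Ss. (norm (iterate x0 Ss - z))\<^sup>2)
    \<le> Exp n B k (\<lambda>Ss. (norm (iterate x0 Ss - z))\<^sup>2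
        - 2 * min_stepsize * bregman (favg n fs) grad z (iterate x0 Ss)
        - min_stepsize * (2 - 1 / c) * favg n fs (iterate x0 Ss))
      + 2 * \<gamma>b * favg n fs z"
proof -
  have "batch_mean n B (\<lambda>S. (norm (sps_step fs gs c \<gamma>b x S - z))\<^sup>2)
      \<le> (norm (x - z))\<^sup>2 - 2 * min_stepsize * bregman (favg n fs) grad z x
        - min_stepsize * (2 - 1 / c) * favg n fs x + 2 * \<gamma>b * favg n fs z" for x
  proof -
    have "batch_mean n B (\<lambda>S. (norm (sps_step fs gs c \<gamma>b x S - z))\<^sup>2)
        \<le> batch_mean n B (\<lambda>S. (norm (x - z))\<^sup>2 - 2 * min_stepsize * bregman (fS fs S) (gS gs S) z x
          - min_stepsize * (2 - 1 / c) * fS fs S x + 2 * \<gamma>b * fS fs S z)"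
      by (rule batch_mean_mono) (rule sps_step_dist_sq_le[OF assms])
    also have "\<dots> = (norm (x - z))\<^sup>2 - 2 * min_stepsize * bregman (favg n fs) grad z x
        - min_stepsize * (2 - 1 / c) * favg n fs x + 2 * \<gamma>b * favg n fs z"
      using B_range by (simp add: batch_mean_add batch_mean_diff batch_mean_cmult batch_mean_const
          batch_mean_fS batch_mean_bregman)
    finally show ?thesis .
  qed
  then have "Exp n B (Suc k) (\<lambda>Ss. (norm (iterate x0 Ss - z))\<^sup>2)
      \<le> Exp n B k (\<lambda>Ss. (norm (iterate x0 Ss - z))\<^sup>2
        - 2 * min_stepsize * bregman (favg n fs) grad z (iterate x0 Ss)
        - min_stepsize * (2 - 1 / c) * favg n fs (iterate x0 Ss) + 2 * \<gamma>b * favg n fs z)"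
    unfolding Exp_Suc by (intro Exp_mono) (simp add: sps_iter_def)
  then show ?thesis
    using B_range by (simp add: Exp_add Exp_const)
qed

lemma sum_expected_favg_le:
  assumes "c = 1"
  shows "min_stepsize * (\<Sum>k<K. Exp n B k (\<lambda>Ss. favg n fs (iterate x0 Ss)))
    \<le> (norm (x0 - z))\<^sup>2 + 2 * \<gamma>b * favg n fs z * real K"
proof -
  define e where "e k = Exp n B k (\<lambda>Ss. (norm (iterate x0 Ss - z))\<^sup>2)" for k
  define F where "F k = Exp n B k (\<lambda>Ss. favg n fs (iterate x0 Ss))" for k
  have descent: "e (Suc k) \<le> e k - min_stepsize * F k + 2 * \<gamma>b * favg n fs z" for k
  proof -
    have "e (Suc k) \<le> Exp n B k (\<lambda>Ss. (norm (iterate x0 Ss - z))\<^sup>2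
          - 2 * min_stepsize * bregman (favg n fs) grad z (iterate x0 Ss)
          - min_stepsize * (2 - 1 / c) * favg n fs (iterate x0 Ss))
        + 2 * \<gamma>b * favg n fs z"
      unfolding e_def using assms by (intro expected_dist_sq_Suc_le) simp
    also have "\<dots> \<le> Exp n B k (\<lambda>Ss. (norm (iterate x0 Ss - z))\<^sup>2 - min_stepsize * favg n fs (iterate x0 Ss))
        + 2 * \<gamma>b * favg n fs z"
    proof -
      have "0 \<le> bregman (favg n fs) grad z x" for x
        by (rule convex_on_bregman_nonneg[OF favg_convex favg_has_derivative])
      then show ?thesis
        using assms min_stepsize_pos by (intro add_right_mono Exp_mono) simp
    qed
    finally show ?thesis
      by (simp add: e_def F_def Exp_diff Exp_cmult)
  qed
  have "e K + min_stepsize * (\<Sum>k<K. F k) \<le> e 0 + 2 * \<gamma>b * favg n fs z * real K"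
  proof (induction K)
    case (Suc K)
    then show ?case using descent[of K] by (simp add: algebra_simps)
  qed simp
  moreover have "e K \<ge> 0" by (simp add: e_def Exp_nonneg)
  moreover have "e 0 = (norm (x0 - z))\<^sup>2" by (simp add: e_def Exp_0 sps_iter_def)
  ultimately show ?thesis by (simp add: F_def)
qed

theorem convex_rate:
  assumes "c = 1" "K \<ge> 1"
  shows "Exp n B K (\<lambda>Ss. favg n fs ((1 / real K) *\<^sub>R (\<Sum>k<K. iterate x0 (take k Ss))) - favg n fs z)
    \<le> (norm (x0 - z))\<^sup>2 / (min_stepsize * real K) + 2 * \<gamma>b * favg n fs z / min_stepsize"
proof -
  let ?\<alpha> = min_stepsize and ?fz = "favg n fs z"
  have K: "real K > 0" using assms(2) by simp
  have "Exp n B K (\<lambda>Ss. favg n fs ((1 / real K) *\<^sub>R (\<Sum>k<K. iterate x0 (take k Ss))) - ?fz)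
      \<le> (\<Sum>k<K. Exp n B k (\<lambda>Ss. favg n fs (iterate x0 Ss))) / real K - ?fz"
    using Exp_convex_average_le[OF favg_convex assms(2) B_range(2)] B_range
    by (simp add: Exp_diff Exp_const)
  also have "\<dots> \<le> ((norm (x0 - z))\<^sup>2 + 2 * \<gamma>b * ?fz * real K) / (?\<alpha> * real K) - ?fz"
    using sum_expected_favg_le[OF assms(1), of x0 K z] min_stepsize_pos K
    by (simp add: divide_simps) (simp add: algebra_simps)
  also have "\<dots> \<le> (norm (x0 - z))\<^sup>2 / (?\<alpha> * real K) + 2 * \<gamma>b * ?fz / ?\<alpha>"
    using K min_stepsize_pos B_range fS_nonneg[of "{..<n}" z]
    by (simp add: add_divide_distrib favg_eq_fS)
  finally show ?thesis .
qed

lemma expected_dist_sq_contraction: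
  assumes "strongly_convex \<mu> (favg n fs)" "c \<ge> 1 / 2"
  shows "Exp n B (Suc k) (\<lambda>Ss. (norm (iterate x0 Ss - z))\<^sup>2)
    \<le> (1 - \<mu> * min_stepsize) * Exp n B k (\<lambda>Ss. (norm (iterate x0 Ss - z))\<^sup>2) + 2 * \<gamma>b * favg n fs z"
proof -
  have "(norm (x - z))\<^sup>2 - 2 * min_stepsize * bregman (favg n fs) grad z x
      - min_stepsize * (2 - 1 / c) * favg n fs x \<le> (1 - \<mu> * min_stepsize) * (norm (x - z))\<^sup>2" for x
  proof -
    have "\<mu> / 2 * (norm (z - x))\<^sup>2 \<le> bregman (favg n fs) grad z x"
      by (rule strongly_convex_bregman_ge[OF assms(1) favg_has_derivative])
    from mult_left_mono[OF this less_imp_le[OF min_stepsize_pos]]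
    have "min_stepsize * (\<mu> / 2 * (norm (x - z))\<^sup>2) \<le> min_stepsize * bregman (favg n fs) grad z x"
      by (simp add: norm_minus_commute)
    moreover have "0 \<le> min_stepsize * (2 - 1 / c) * favg n fs x"
      using min_stepsize_pos assms(2) fS_nonneg[of "{..<n}" x]
      by (intro mult_nonneg_nonneg) (auto simp: favg_eq_fS field_simps)
    ultimately show ?thesis
      by (simp add: algebra_simps)
  qed
  then have "Exp n B k (\<lambda>Ss. (norm (iterate x0 Ss - z))\<^sup>2
        - 2 * min_stepsize * bregman (favg n fs) grad z (iterate x0 Ss)
        - min_stepsize * (2 - 1 / c) * favg n fs (iterate x0 Ss))
      \<le> (1 - \<mu> * min_stepsize) * Exp n B k (\<lambda>Ss. (norm (iterate x0 Ss - z))\<^sup>2)"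
    unfolding Exp_cmult[symmetric] by (rule Exp_mono)
  with expected_dist_sq_Suc_le[OF assms(2), of k x0 z] show ?thesis by linarith
qed

theorem strongly_convex_rate:
  assumes "\<mu> > 0" "strongly_convex \<mu> (favg n fs)" "c \<ge> 1 / 2"
  shows "Exp n B k (\<lambda>Ss. (norm (iterate x0 Ss - z))\<^sup>2)
    \<le> (1 - \<mu> * min_stepsize) ^ k * (norm (x0 - z))\<^sup>2 + 2 * \<gamma>b * favg n fs z / (\<mu> * min_stepsize)"
proof -
  have "\<mu> * min_stepsize \<le> Lmax * (1 / (2 * c * Lmax))"
    using strongly_convex_le_L_smooth[OF assms(2) favg_L_smooth] assms(1) min_stepsize_pos
    by (intro mult_mono) (auto simp: min_stepsize_def)
  also have "\<dots> \<le> 1"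
    using Lmax_pos assms(3) by (simp add: field_simps)
  finally have "0 \<le> 1 - \<mu> * min_stepsize" by simp
  moreover have "0 \<le> 2 * \<gamma>b * favg n fs z"
    using gb_pos fS_nonneg[of "{..<n}" z] by (simp add: favg_eq_fS)
  ultimately show ?thesis
    using affine_recurrence_le[where e = "\<lambda>k. Exp n B k (\<lambda>Ss. (norm (iterate x0 Ss - z))\<^sup>2)",
        OF expected_dist_sq_contraction[OF assms(2,3)]] assms(1) min_stepsize_pos
    by (simp add: Exp_0 sps_iter_def)
qed

end

theorem corollary1:
  fixes fs :: "nat \<Rightarrow> 'a::euclidean_space \<Rightarrow> real"
    and gs :: "nat \<Rightarrow> 'a \<Rightarrow> 'a"
    and L :: "nat \<Rightarrow> real"
    and n B :: nat
    and c \<gamma>b \<mu> :: real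
    and x0 xstar :: 'a
  assumes n_pos: "n \<ge> 1"
    and B_range: "1 \<le> B" "B \<le> n"
    and c_pos: "c > 0" and gb_pos: "\<gamma>b > 0"
    and L_pos: "\<And>i. i < n \<Longrightarrow> L i > 0"
    and convex: "\<And>i. i < n \<Longrightarrow> convex_on UNIV (fs i)"
    and smooth: "\<And>i. i < n \<Longrightarrow> L_smooth (L i) (fs i) (gs i)"
    and nonneg: "\<And>i x. i < n \<Longrightarrow> fs i x \<ge> 0"
    and minimizer: "\<And>x. favg n fs xstar \<le> favg n fs x"
  defines "\<alpha> \<equiv> min (1 / (2 * c * Max (L ` {..<n}))) \<gamma>b"
  shows
    "(c = 1 \<longrightarrow>
       (\<forall>K\<ge>1. Exp n B K (\<lambda>Ss.
            favg n fs ((1 / real K) *\<^sub>R (\<Sum>k<K. sps_iter fs gs c \<gamma>b x0 (take k Ss)))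
            - favg n fs xstar)
         \<le> (norm (x0 - xstar))\<^sup>2 / (\<alpha> * real K) + 2 * \<gamma>b * favg n fs xstar / \<alpha>))
     \<and>
     ((\<mu> > 0 \<and> strongly_convex \<mu> (favg n fs) \<and> c \<ge> 1/2) \<longrightarrow>
       (\<forall>k. Exp n B k (\<lambda>Ss. (norm (sps_iter fs gs c \<gamma>b x0 Ss - xstar))\<^sup>2)
         \<le> (1 - \<mu> * \<alpha>) ^ k * (norm (x0 - xstar))\<^sup>2 + 2 * \<gamma>b * favg n fs xstar / (\<mu> * \<alpha>)))"
proof -
  interpret sps_minibatch fs gs L n B c \<gamma>b
    using B_range c_pos gb_pos L_pos convex smooth nonneg by unfold_locales auto
  have "\<alpha> = min_stepsize"
    by (simp add: \<alpha>_def min_stepsize_def Lmax_def)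
  \<comment> \<open>Both rates hold for every reference point.\<close>
  then show ?thesis
    using convex_rate[of _ x0 xstar] strongly_convex_rate[of \<mu> _ x0 xstar] by auto
qed

end
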